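(* Let $k$ be a field, $\mathsf{E}$ a locally finite $k$-linear category, $P$ a left $\mathsf{E}$-module, and $Q',Q''\subseteq P$ two big $\mathsf{E}$-submodules of $P$. Then $Q'\cap Q''$ is a big $\mathsf{E}$-submodule of $P$.
   Context: A small $k$-linear category $\mathsf{E}$ has $k$-vector spaces $\operatorname{Hom}_\mathsf{E}(x,y)$, $k$-bilinear associative composition and identities with $\mathrm{id}_x\ne0$. A left $\mathsf{E}$-module is a $k$-linear functor $\mathsf{E}\to k\text{-Vect}$. Write $x\preceq y$ if there are $n\ge1$ and objects $x=z_0,\dots,z_n=y$ with $\operatorname{Hom}_\mathsf{E}(z_{i-1},z_i)\neq0$ for all $i$. $\mathsf{E}$ is locally finite if all Hom spaces are finite-dimensional and every $\{z:x\preceq z\preceq y\}$ is finite. A left $\mathsf{E}$-module $T$ is contrafinite if for every object $y$ there is a finite set of objects $A$ such that the action map $\operatorname{Hom}_\mathsf{E}(x,y)\otimes_kT(x)\to T(y)$ vanishes for all $x\notin A$. A submodule $Q\subseteq P$ is big if $P/Q$ is contrafinite. *)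

theory Defs
  imports Complex_Main
begin

text \<open>Morphisms live in an ambient k-vector space of type 'm (scalar multiplication sm);
  Hom x y is a k-subspace of it. Composition is indexed by the objects:
  cmp x y z g f is g composed with f, for f in Hom x y and g in Hom y z.\<close>

definition klin_cat ::
  "('k::field \<Rightarrow> 'm::ab_group_add \<Rightarrow> 'm) \<Rightarrow> ('o \<Rightarrow> 'o \<Rightarrow> 'm set)
   \<Rightarrow> ('o \<Rightarrow> 'o \<Rightarrow> 'o \<Rightarrow> 'm \<Rightarrow> 'm \<Rightarrow> 'm) \<Rightarrow> ('o \<Rightarrow> 'm) \<Rightarrow> bool" where
  "klin_cat sm Hom cmp ident \<longleftrightarrow>
     vector_space sm \<and>
     (\<forall>x y. module.subspace sm (Hom x y)) \<and>
     (\<forall>x y z. \<forall>g\<in>Hom y z. \<forall>f\<in>Hom x y. cmp x y z g f \<in> Hom x z) \<and>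
     (\<forall>x y z. \<forall>g\<in>Hom y z. \<forall>f\<in>Hom x y. \<forall>f'\<in>Hom x y. \<forall>c.
        cmp x y z g (f + f') = cmp x y z g f + cmp x y z g f' \<and>
        cmp x y z g (sm c f) = sm c (cmp x y z g f)) \<and>
     (\<forall>x y z. \<forall>g\<in>Hom y z. \<forall>g'\<in>Hom y z. \<forall>f\<in>Hom x y. \<forall>c.
        cmp x y z (g + g') f = cmp x y z g f + cmp x y z g' f \<and>
        cmp x y z (sm c g) f = sm c (cmp x y z g f)) \<and>
     (\<forall>w x y z. \<forall>h\<in>Hom y z. \<forall>g\<in>Hom x y. \<forall>f\<in>Hom w x.
        cmp w x z (cmp x y z h g) f = cmp w y z h (cmp w x y g f)) \<and>
     (\<forall>x. ident x \<in> Hom x x \<and> ident x \<noteq> 0) \<and>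
     (\<forall>x y. \<forall>f\<in>Hom x y. cmp x y y (ident y) f = f \<and> cmp x x y f (ident x) = f)"

definition hom_prec :: "('o \<Rightarrow> 'o \<Rightarrow> 'm::zero set) \<Rightarrow> ('o \<times> 'o) set" where
  "hom_prec Hom = {(x, y). Hom x y \<noteq> {0}}\<^sup>+"

definition locally_finite ::
  "('k::field \<Rightarrow> 'm::ab_group_add \<Rightarrow> 'm) \<Rightarrow> ('o \<Rightarrow> 'o \<Rightarrow> 'm set) \<Rightarrow> bool" where
  "locally_finite sm Hom \<longleftrightarrow>
     (\<forall>x y. \<exists>B. finite B \<and> B \<subseteq> Hom x y \<and> module.span sm B = Hom x y) \<and>
     (\<forall>x y. finite {z. (x, z) \<in> hom_prec Hom \<and> (z, y) \<in> hom_prec Hom})"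

text \<open>A left E-module: T x is a k-subspace of an ambient k-vector space of type 'v
  (scalar multiplication sv); act x y f t is the action of f in Hom x y on t in T x.\<close>
definition left_module ::
  "('k::field \<Rightarrow> 'm::ab_group_add \<Rightarrow> 'm) \<Rightarrow> ('o \<Rightarrow> 'o \<Rightarrow> 'm set)
   \<Rightarrow> ('o \<Rightarrow> 'o \<Rightarrow> 'o \<Rightarrow> 'm \<Rightarrow> 'm \<Rightarrow> 'm) \<Rightarrow> ('o \<Rightarrow> 'm)
   \<Rightarrow> ('k \<Rightarrow> 'v::ab_group_add \<Rightarrow> 'v) \<Rightarrow> ('o \<Rightarrow> 'v set)
   \<Rightarrow> ('o \<Rightarrow> 'o \<Rightarrow> 'm \<Rightarrow> 'v \<Rightarrow> 'v) \<Rightarrow> bool" where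
  "left_module sm Hom cmp ident sv T act \<longleftrightarrow>
     vector_space sv \<and>
     (\<forall>x. module.subspace sv (T x)) \<and>
     (\<forall>x y. \<forall>f\<in>Hom x y. \<forall>t\<in>T x. act x y f t \<in> T y) \<and>
     (\<forall>x y. \<forall>f\<in>Hom x y. \<forall>t\<in>T x. \<forall>t'\<in>T x. \<forall>c.
        act x y f (t + t') = act x y f t + act x y f t' \<and>
        act x y f (sv c t) = sv c (act x y f t)) \<and>
     (\<forall>x y. \<forall>f\<in>Hom x y. \<forall>f'\<in>Hom x y. \<forall>t\<in>T x. \<forall>c.
        act x y (f + f') t = act x y f t + act x y f' t \<and>
        act x y (sm c f) t = sv c (act x y f t)) \<and>
     (\<forall>x y z. \<forall>g\<in>Hom y z. \<forall>f\<in>Hom x y. \<forall>t\<in>T x.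
        act x z (cmp x y z g f) t = act y z g (act x y f t)) \<and>
     (\<forall>x. \<forall>t\<in>T x. act x x (ident x) t = t)"

definition submodule ::
  "('o \<Rightarrow> 'o \<Rightarrow> 'm set) \<Rightarrow> ('k::field \<Rightarrow> 'v::ab_group_add \<Rightarrow> 'v) \<Rightarrow> ('o \<Rightarrow> 'v set)
   \<Rightarrow> ('o \<Rightarrow> 'o \<Rightarrow> 'm \<Rightarrow> 'v \<Rightarrow> 'v) \<Rightarrow> ('o \<Rightarrow> 'v set) \<Rightarrow> bool" where
  "submodule Hom sv P act Q \<longleftrightarrow>
     (\<forall>x. module.subspace sv (Q x) \<and> Q x \<subseteq> P x) \<and>
     (\<forall>x y. \<forall>f\<in>Hom x y. \<forall>t\<in>Q x. act x y f t \<in> Q y)"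

text \<open>Contrafinite module: the action map Hom(x,y) \<otimes> T(x) \<rightarrow> T(y) vanishes
  (equivalently, vanishes on all pure tensors f \<otimes> t) for x outside a finite set.\<close>
definition contrafinite ::
  "('o \<Rightarrow> 'o \<Rightarrow> 'm set) \<Rightarrow> ('o \<Rightarrow> 'v::zero set) \<Rightarrow> ('o \<Rightarrow> 'o \<Rightarrow> 'm \<Rightarrow> 'v \<Rightarrow> 'v) \<Rightarrow> bool" where
  "contrafinite Hom T act \<longleftrightarrow>
     (\<forall>y. \<exists>A. finite A \<and> (\<forall>x. x \<notin> A \<longrightarrow> (\<forall>f\<in>Hom x y. \<forall>t\<in>T x. act x y f t = 0)))"

text \<open>Q \<subseteq> P is big iff P/Q is contrafinite. The action of P/Q sends f \<otimes> [t] to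
  [act f t]; it vanishes iff act f t \<in> Q y. This is the quotient condition spelled out.\<close>
definition big_submodule ::
  "('o \<Rightarrow> 'o \<Rightarrow> 'm set) \<Rightarrow> ('k::field \<Rightarrow> 'v::ab_group_add \<Rightarrow> 'v) \<Rightarrow> ('o \<Rightarrow> 'v set)
   \<Rightarrow> ('o \<Rightarrow> 'o \<Rightarrow> 'm \<Rightarrow> 'v \<Rightarrow> 'v) \<Rightarrow> ('o \<Rightarrow> 'v set) \<Rightarrow> bool" where
  "big_submodule Hom sv P act Q \<longleftrightarrow>
     submodule Hom sv P act Q \<and>
     (\<forall>y. \<exists>A. finite A \<and> (\<forall>x. x \<notin> A \<longrightarrow> (\<forall>f\<in>Hom x y. \<forall>t\<in>P x. act x y f t \<in> Q y)))"

end

theory Submission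
  imports Defs
begin

text \<open>Outside the union of the two finite exceptional sets of objects, the action lands in
  both submodules and hence in their intersection.\<close>

lemma submodule_inter:
  assumes "module sv"
    and "submodule Hom sv P act Q'" "submodule Hom sv P act Q''"
  shows "submodule Hom sv P act (\<lambda>x. Q' x \<inter> Q'' x)"
  using assms module.subspace_inter[OF \<open>module sv\<close>] unfolding submodule_def by blast

lemma big_submodule_inter:
  assumes "module sv"
    and big': "big_submodule Hom sv P act Q'"
    and big'': "big_submodule Hom sv P act Q''"
  shows "big_submodule Hom sv P act (\<lambda>x. Q' x \<inter> Q'' x)"
proof -
  have "\<exists>A. finite A \<and>
      (\<forall>x. x \<notin> A \<longrightarrow> (\<forall>f\<in>Hom x y. \<forall>t\<in>P x. act x y f t \<in> Q' y \<inter> Q'' y))" for y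
  proof -
    obtain A' where "finite A'"
      and A': "\<forall>x. x \<notin> A' \<longrightarrow> (\<forall>f\<in>Hom x y. \<forall>t\<in>P x. act x y f t \<in> Q' y)"
      using big' unfolding big_submodule_def by blast
    obtain A'' where "finite A''"
      and A'': "\<forall>x. x \<notin> A'' \<longrightarrow> (\<forall>f\<in>Hom x y. \<forall>t\<in>P x. act x y f t \<in> Q'' y)"
      using big'' unfolding big_submodule_def by blast
    show ?thesis
      using \<open>finite A'\<close> \<open>finite A''\<close> A' A'' by (intro exI[of _ "A' \<union> A''"]) auto
  qed
  moreover have "submodule Hom sv P act (\<lambda>x. Q' x \<inter> Q'' x)"
    using submodule_inter[OF \<open>module sv\<close>] big' big'' unfolding big_submodule_def by blast
  ultimately show ?thesis
    unfolding big_submodule_def by blast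
qed

theorem lemma4p9:
  fixes sm :: "'k::field \<Rightarrow> 'm::ab_group_add \<Rightarrow> 'm"
    and Hom :: "'o \<Rightarrow> 'o \<Rightarrow> 'm set"
    and cmp :: "'o \<Rightarrow> 'o \<Rightarrow> 'o \<Rightarrow> 'm \<Rightarrow> 'm \<Rightarrow> 'm"
    and ident :: "'o \<Rightarrow> 'm"
    and sv :: "'k \<Rightarrow> 'v::ab_group_add \<Rightarrow> 'v"
    and P Q' Q'' :: "'o \<Rightarrow> 'v set"
    and act :: "'o \<Rightarrow> 'o \<Rightarrow> 'm \<Rightarrow> 'v \<Rightarrow> 'v"
  assumes "klin_cat sm Hom cmp ident"
    and "locally_finite sm Hom"
    and "left_module sm Hom cmp ident sv P act"
    and "big_submodule Hom sv P act Q'"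
    and "big_submodule Hom sv P act Q''"
  shows "big_submodule Hom sv P act (\<lambda>x. Q' x \<inter> Q'' x)"
proof -
  have "module sv"
    using \<open>left_module sm Hom cmp ident sv P act\<close>
    by (simp add: left_module_def vector_space_def module_def)
  then show ?thesis
    using big_submodule_inter assms(4,5) by blast
qed

end
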